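(* Let $\mathbb{F}_q$ be a finite field and $\mathcal{M}=\mathbb{F}_q\times\mathbb{F}_q^{*}\times\mathbb{F}_q$. For $(x,y,z)\in\mathcal{M}$ let $C(x,y,z)=\{(x_1,y_1,z_1)\in\mathcal{M}: x_1y-y_1x=z_1-z\}$. Then $\mathcal{M}=\bigsqcup_{m\in\mathbb{F}_q}C(m,1,0)$ is a disjoint union, and each $C(m,1,0)$ has cardinality $q(q-1)$.
   Context: $C(x,y,z)$ is the centralizer of $(x,y,z)$ for the commuting relation on $\mathcal{M}$ given by: $(x_1,y_1,z_1)$ and $(x_2,y_2,z_2)$ commute iff $x_1y_2-y_1x_2=z_1-z_2$. *)

theory Defs
  imports Main
begin

definition Mset :: "('a::{field,finite} \<times> 'a \<times> 'a) set" where
  "Mset = {(x, y, z). y \<noteq> 0}"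

definition centr :: "'a::{field,finite} \<Rightarrow> 'a \<Rightarrow> 'a \<Rightarrow> ('a \<times> 'a \<times> 'a) set" where
  "centr x y z = {(x1, y1, z1). (x1, y1, z1) \<in> Mset \<and> x1 * y - y1 * x = z1 - z}"

end

theory Submission
  imports Defs
begin

text \<open>A point (x, y, z) of M lies in C(m, 1, 0) exactly when x = z + m y; since y is
  invertible, m = (x - z)/y is determined by the point, which gives the partition.
  Each class is the bijective image of the parameters (y, z) \<in> F_q^* \<times> F_q.\<close>

lemma mem_centr_1_0_iff:
  "(x, y, z) \<in> centr m 1 0 \<longleftrightarrow> y \<noteq> 0 \<and> x = z + y * m"
  by (auto simp: centr_def Mset_def algebra_simps)

lemma Mset_eq_Union_centr_1_0: "Mset = (\<Union>m. centr m 1 0)"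
proof (intro set_eqI iffI)
  fix p :: "'a::{field,finite} \<times> 'a \<times> 'a"
  assume "p \<in> Mset"
  then obtain x y z where p: "p = (x, y, z)" and "y \<noteq> 0"
    by (auto simp: Mset_def)
  then have "p \<in> centr ((x - z) / y) 1 0"
    by (simp add: mem_centr_1_0_iff field_simps)
  then show "p \<in> (\<Union>m. centr m 1 0)" by blast
qed (auto simp: centr_def)

lemma centr_1_0_disjoint:
  assumes "m \<noteq> m'"
  shows "centr m 1 0 \<inter> centr m' 1 0 = {}"
  using assms by (auto simp: mem_centr_1_0_iff)

lemma centr_1_0_eq_image:
  "centr m 1 0 = (\<lambda>(y, z). (z + y * m, y, z)) ` ((UNIV - {0}) \<times> UNIV)"
  by (auto simp: mem_centr_1_0_iff image_iff)

lemma card_centr_1_0: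
  "card (centr (m::'a::{field,finite}) 1 0) = card (UNIV :: 'a set) * (card (UNIV :: 'a set) - 1)"
proof -
  have "inj_on (\<lambda>(y, z). (z + y * m, y, z)) ((UNIV - {0::'a}) \<times> UNIV)"
    by (auto simp: inj_on_def)
  then have "card (centr m 1 0) = card ((UNIV - {0::'a}) \<times> (UNIV :: 'a set))"
    unfolding centr_1_0_eq_image by (rule card_image)
  also have "\<dots> = card (UNIV :: 'a set) * (card (UNIV :: 'a set) - 1)"
    by (simp add: card_cartesian_product card_Diff_subset)
  finally show ?thesis .
qed

theorem lemma6p1:
  shows "(Mset :: ('a::{field,finite} \<times> 'a \<times> 'a) set) = (\<Union>m::'a. centr m 1 0)
    \<and> (\<forall>m m' :: 'a. m \<noteq> m' \<longrightarrow> centr m 1 0 \<inter> centr m' 1 0 = {})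
    \<and> (\<forall>m::'a. card (centr m 1 0) = card (UNIV :: 'a set) * (card (UNIV :: 'a set) - 1))"
  using Mset_eq_Union_centr_1_0 centr_1_0_disjoint card_centr_1_0 by blast

end
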